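(* Let $F\colon\mathbb{R}^n\to\mathbb{R}^n$ be a polynomial map, let $g_1,\dots,g_r,h_1,\dots,h_s$ be real polynomials on $\mathbb{R}^n$ with $\Omega:=\{x: g_i(x)\le0\ \forall i,\ h_j(x)=0\ \forall j\}$ nonempty, fix $\rho>0$, let $\phi(x,y):=\langle F(x),x-y\rangle-\frac{\rho}{2}\|x-y\|^2$, $\psi(x):=\sup_{y\in\Omega}\phi(x,y)$, and $\Omega(x):=\{y\in\Omega:\psi(x)=\phi(x,y)\}$. Assume (MFCQ) holds on $\Omega$. Let $x\in\mathbb{R}^n$. Then for each $y\in\Omega(x)$, $$\hat\partial(-\psi)(x)\subset\{v\in\mathbb{R}^n: (v,0)\in-\nabla\phi(x,y)+\{0\}\times N(\Omega,y)\},$$ where $\nabla\phi(x,y)\in\mathbb{R}^n\times\mathbb{R}^n$ is the full gradient of $\phi$.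
   Context: $\hat\partial f(x)$ is the Fréchet subdifferential: $\{v:\liminf_{h\to0,h\ne0}\frac{f(x+h)-f(x)-\langle v,h\rangle}{\|h\|}\ge0\}$. For $y\in\Omega$, $N(\Omega,y):=\{\sum_{i=1}^r\mu_i\nabla g_i(y)+\sum_{j=1}^s\kappa_j\nabla h_j(y): \mu_i,\kappa_j\in\mathbb{R},\ \mu_i\ge0,\ \mu_i g_i(y)=0\}$. (MFCQ) holds on $\Omega$ means: for every $x\in\Omega$, the vectors $\nabla h_j(x)$ are linearly independent and there exists $v$ with $\langle\nabla g_i(x),v\rangle<0$ for all $i$ with $g_i(x)=0$ and $\langle\nabla h_j(x),v\rangle=0$ for all $j$. *)

theory Defs
  imports "HOL-Analysis.Analysis"
begin

inductive real_poly_fun :: "(real ^ 'n \<Rightarrow> real) \<Rightarrow> bool" where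
  const: "real_poly_fun (\<lambda>x. c)"
| coord: "real_poly_fun (\<lambda>x. x $ i)"
| add: "real_poly_fun p \<Longrightarrow> real_poly_fun q \<Longrightarrow> real_poly_fun (\<lambda>x. p x + q x)"
| mult: "real_poly_fun p \<Longrightarrow> real_poly_fun q \<Longrightarrow> real_poly_fun (\<lambda>x. p x * q x)"

definition grad :: "('a::real_inner \<Rightarrow> real) \<Rightarrow> 'a \<Rightarrow> 'a" where
  "grad f z = (SOME v. (f has_derivative (\<lambda>h. inner v h)) (at z))"

definition fsubdiff :: "('a::real_inner \<Rightarrow> real) \<Rightarrow> 'a \<Rightarrow> 'a set"
  where "fsubdiff f x =
    {v. Liminf (at 0) (\<lambda>h. ereal ((f (x + h) - f x - inner v h) / norm h)) \<ge> 0}"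

definition feas_set :: "nat \<Rightarrow> nat \<Rightarrow> (nat \<Rightarrow> 'a \<Rightarrow> real) \<Rightarrow> (nat \<Rightarrow> 'a \<Rightarrow> real) \<Rightarrow> 'a set" where
  "feas_set r s g h = {x. (\<forall>i<r. g i x \<le> 0) \<and> (\<forall>j<s. h j x = 0)}"

definition normal_cone :: "nat \<Rightarrow> nat \<Rightarrow> (nat \<Rightarrow> 'a::real_inner \<Rightarrow> real) \<Rightarrow> (nat \<Rightarrow> 'a \<Rightarrow> real) \<Rightarrow> 'a \<Rightarrow> 'a set" where
  "normal_cone r s g h y =
    {(\<Sum>i<r. \<mu> i *\<^sub>R grad (g i) y) + (\<Sum>j<s. \<kappa> j *\<^sub>R grad (h j) y) | \<mu> \<kappa>.
        (\<forall>i<r. \<mu> i \<ge> 0 \<and> \<mu> i * g i y = 0)}"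

definition MFCQ :: "nat \<Rightarrow> nat \<Rightarrow> (nat \<Rightarrow> 'a::real_inner \<Rightarrow> real) \<Rightarrow> (nat \<Rightarrow> 'a \<Rightarrow> real) \<Rightarrow> bool" where
  "MFCQ r s g h \<longleftrightarrow> (\<forall>x \<in> feas_set r s g h.
     (\<forall>c. (\<Sum>j<s. c j *\<^sub>R grad (h j) x) = 0 \<longrightarrow> (\<forall>j<s. c j = 0)) \<and>
     (\<exists>v. (\<forall>i<r. g i x = 0 \<longrightarrow> inner (grad (g i) x) v < 0) \<and>
          (\<forall>j<s. inner (grad (h j) x) v = 0)))"

end

theory Submission
  imports Defs
begin

text \<open>Since y is feasible, \<psi> \<ge> \<phi>(-, y) with equality at x, so every Frechet subgradient of
  -\<psi> at x is one of the smooth function -\<phi>(-, y), i.e. the negated x-part of \<nabla>\<phi>(x, y).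
  On the other hand y maximizes the smooth function \<phi>(x, -) over \<Omega>, so under MFCQ the
  Karush-Kuhn-Tucker conditions hold there: the y-part of \<nabla>\<phi>(x, y) lies in N(\<Omega>, y). These are
  derived in the classical way: along a direction that strictly satisfies the linearized active
  constraints, the inverse function theorem yields a feasible arc, so the gradient of the
  objective is nonpositive on it; the MFCQ direction extends this to the whole linearized cone,
  whose polar cone lies in N(\<Omega>, y) by Farkas' lemma.\<close>

lemma real_poly_fun_continuous_gradient:
  fixes p :: "real ^ 'n \<Rightarrow> real"
  assumes "real_poly_fun p"
  shows "\<exists>G. continuous_on UNIV G \<and> (\<forall>z. (p has_derivative (\<lambda>k. G z \<bullet> k)) (at z))"
  using assms
proof induction
  case (const c)
  show ?case by (rule exI[of _ "\<lambda>z. 0"]) (auto intro!: derivative_eq_intros)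
next
  case (coord i)
  show ?case
    by (rule exI[of _ "\<lambda>z. axis i 1"])
       (auto intro!: derivative_eq_intros simp: cart_eq_inner_axis inner_commute)
next
  case (add p q)
  then obtain Gp Gq where p: "continuous_on UNIV Gp" "\<And>z. (p has_derivative (\<lambda>k. Gp z \<bullet> k)) (at z)"
    and q: "continuous_on UNIV Gq" "\<And>z. (q has_derivative (\<lambda>k. Gq z \<bullet> k)) (at z)" by blast
  show ?case
    by (rule exI[of _ "\<lambda>z. Gp z + Gq z"])
       (auto intro!: derivative_eq_intros p q continuous_intros simp: inner_add_left)
next
  case (mult p q)
  then obtain Gp Gq where p: "continuous_on UNIV Gp" "\<And>z. (p has_derivative (\<lambda>k. Gp z \<bullet> k)) (at z)"
    and q: "continuous_on UNIV Gq" "\<And>z. (q has_derivative (\<lambda>k. Gq z \<bullet> k)) (at z)" by blast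
  have cp: "continuous_on UNIV p" using p(2)
    by (meson continuous_at_imp_continuous_on has_derivative_continuous)
  have cq: "continuous_on UNIV q" using q(2)
    by (meson continuous_at_imp_continuous_on has_derivative_continuous)
  show ?case
    by (rule exI[of _ "\<lambda>z. p z *\<^sub>R Gq z + q z *\<^sub>R Gp z"])
       (auto intro!: derivative_eq_intros p q cp cq continuous_intros simp: inner_add_left algebra_simps)
qed

lemma grad_eqI:
  assumes "(f has_derivative (\<lambda>h. v \<bullet> h)) (at z)"
  shows "grad f z = v"
proof -
  have "(f has_derivative (\<lambda>h. grad f z \<bullet> h)) (at z)"
    unfolding grad_def by (rule someI[of _ v]) (rule assms)
  then have "(\<lambda>h. grad f z \<bullet> h) = (\<lambda>h. v \<bullet> h)"
    using assms has_derivative_unique by blast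
  then show ?thesis
    by (simp add: fun_eq_iff vector_eq_rdot)
qed

lemma has_derivative_grad:
  fixes f :: "'a::euclidean_space \<Rightarrow> real"
  assumes "f differentiable at z"
  shows "(f has_derivative (\<lambda>h. grad f z \<bullet> h)) (at z)"
proof -
  obtain D where D: "(f has_derivative D) (at z)"
    using assms differentiable_def by blast
  define w where "w = adjoint D 1"
  have "D = (\<lambda>h. w \<bullet> h)"
    using adjoint_works[OF has_derivative_linear[OF D], of _ 1]
    by (simp add: fun_eq_iff w_def inner_commute)
  with D have "(f has_derivative (\<lambda>h. w \<bullet> h)) (at z)"
    by simp
  then show ?thesis
    unfolding grad_def by (rule someI)
qed

lemma real_poly_fun_grad:
  fixes p :: "real ^ 'n \<Rightarrow> real"
  assumes "real_poly_fun p"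
  shows real_poly_fun_has_derivative_grad: "(p has_derivative (\<lambda>k. grad p z \<bullet> k)) (at z)"
    and continuous_on_grad_real_poly_fun: "continuous_on UNIV (grad p)"
proof -
  obtain G where G: "continuous_on UNIV G" "\<And>z. (p has_derivative (\<lambda>k. G z \<bullet> k)) (at z)"
    using real_poly_fun_continuous_gradient[OF assms] by blast
  then have "grad p = G"
    by (intro ext grad_eqI)
  with G show "(p has_derivative (\<lambda>k. grad p z \<bullet> k)) (at z)" "continuous_on UNIV (grad p)"
    by simp_all
qed

lemma real_poly_fun_differentiable:
  fixes p :: "real ^ 'n \<Rightarrow> real"
  assumes "real_poly_fun p"
  shows "p differentiable at z"
  using real_poly_fun_has_derivative_grad[OF assms] by (rule differentiableI)

lemma has_derivative_Pair_fst:
  assumes "(f has_derivative (\<lambda>p. w \<bullet> p)) (at (a, b))"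
  shows "((\<lambda>u. f (u, b)) has_derivative (\<lambda>k. fst w \<bullet> k)) (at a)"
  using has_derivative_compose[OF has_derivative_Pair[OF has_derivative_ident has_derivative_const], OF assms]
  by (simp add: inner_Pair_0)

lemma has_derivative_Pair_snd:
  assumes "(f has_derivative (\<lambda>p. w \<bullet> p)) (at (a, b))"
  shows "((\<lambda>v. f (a, v)) has_derivative (\<lambda>k. snd w \<bullet> k)) (at b)"
  using has_derivative_compose[OF has_derivative_Pair[OF has_derivative_const has_derivative_ident], OF assms]
  by (simp add: inner_Pair_0)

lemma fsubdiff_iff:
  "v \<in> fsubdiff f x \<longleftrightarrow>
     (\<forall>e>0. eventually (\<lambda>h. - e * norm h < f (x + h) - f x - v \<bullet> h) (at 0))"
proof -
  have nz: "eventually (\<lambda>h. h \<noteq> 0) (at (0::'a))"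
    by (simp add: eventually_at_filter)
  have quot: "c < q / norm h \<longleftrightarrow> c * norm h < q" if "h \<noteq> 0" for c q and h :: 'a
    using that by (simp add: less_divide_eq)
  show ?thesis
    unfolding fsubdiff_def mem_Collect_eq le_Liminf_iff
  proof safe
    fix e :: real assume "e > 0"
    assume "\<forall>y<0. eventually (\<lambda>h. y < ereal ((f (x + h) - f x - v \<bullet> h) / norm h)) (at 0)"
    moreover have "ereal (- e) < 0"
      using \<open>e > 0\<close> by simp
    ultimately have "eventually (\<lambda>h. ereal (- e) < ereal ((f (x + h) - f x - v \<bullet> h) / norm h)) (at 0)"
      by blast
    with nz show "eventually (\<lambda>h. - e * norm h < f (x + h) - f x - v \<bullet> h) (at 0)"
      by eventually_elim (simp add: quot)
  next
    fix y :: ereal assume "y < 0"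
    assume all: "\<forall>e>0. eventually (\<lambda>h. - e * norm h < f (x + h) - f x - v \<bullet> h) (at 0)"
    show "eventually (\<lambda>h. y < ereal ((f (x + h) - f x - v \<bullet> h) / norm h)) (at 0)"
    proof (cases y)
      case (real c)
      with \<open>y < 0\<close> have "- c > 0"
        by simp
      with all have "eventually (\<lambda>h. - (- c) * norm h < f (x + h) - f x - v \<bullet> h) (at 0)"
        by blast
      with nz show ?thesis
        by eventually_elim (simp add: real quot)
    qed (use \<open>y < 0\<close> in auto)
  qed
qed

lemma fsubdiff_mono:
  assumes "\<And>z. f z \<le> g z" and "f x = g x"
  shows "fsubdiff f x \<subseteq> fsubdiff g x"
proof
  fix v assume "v \<in> fsubdiff f x"
  have le: "f (x + h) - f x - v \<bullet> h \<le> g (x + h) - g x - v \<bullet> h" for h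
    using assms(1)[of "x + h"] assms(2) by simp
  show "v \<in> fsubdiff g x"
    unfolding fsubdiff_iff
  proof (intro allI impI)
    fix e :: real assume "e > 0"
    with \<open>v \<in> fsubdiff f x\<close> have "eventually (\<lambda>h. - e * norm h < f (x + h) - f x - v \<bullet> h) (at 0)"
      unfolding fsubdiff_iff by blast
    then show "eventually (\<lambda>h. - e * norm h < g (x + h) - g x - v \<bullet> h) (at 0)"
      by eventually_elim (rule order.strict_trans2[OF _ le])
  qed
qed

lemma fsubdiff_subset_gradient:
  assumes "(f has_derivative (\<lambda>h. G \<bullet> h)) (at x)"
  shows "fsubdiff f x \<subseteq> {G}"
proof
  fix v assume "v \<in> fsubdiff f x"
  show "v \<in> {G}"
  proof (rule ccontr)
    assume "v \<notin> {G}"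
    define u where "u = v - G"
    define e where "e = norm u / 2"
    have "e > 0" using \<open>v \<notin> {G}\<close> by (simp add: e_def u_def)
    have "eventually (\<lambda>h. - e * norm h < f (x + h) - f x - v \<bullet> h) (at 0)"
      using \<open>v \<in> fsubdiff f x\<close> \<open>e > 0\<close> unfolding fsubdiff_iff by blast
    moreover have "eventually (\<lambda>h. f (x + h) - f x - G \<bullet> h \<le> e * norm h) (at 0)"
    proof -
      obtain d where "d > 0" and d: "\<And>z. norm (z - x) < d \<Longrightarrow> norm (f z - f x - G \<bullet> (z - x)) \<le> e * norm (z - x)"
        using assms \<open>e > 0\<close> unfolding has_derivative_at_alt by blast
      have "f (x + h) - f x - G \<bullet> h \<le> e * norm h" if "norm h < d" for h
        using d[of "x + h"] that by simp
      with \<open>d > 0\<close> show ?thesis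
        unfolding eventually_at dist_norm by (intro exI[of _ d]) simp
    qed
    ultimately have "eventually (\<lambda>h. - u \<bullet> h > - norm u * norm h) (at 0)"
      by eventually_elim (simp add: e_def u_def inner_diff_left)
    then obtain d where "d > 0" and d: "\<And>h. h \<noteq> 0 \<Longrightarrow> norm h < d \<Longrightarrow> - u \<bullet> h > - norm u * norm h"
      unfolding eventually_at by (auto simp: dist_norm)
    define t where "t = d / (2 * norm u)"
    have "u \<noteq> 0" "t > 0" "t * norm u < d"
      using \<open>d > 0\<close> \<open>e > 0\<close> by (auto simp: t_def e_def)
    with d[of "t *\<^sub>R u"] show False
      by (simp add: power2_norm_eq_inner[symmetric] power2_eq_square)
  qed
qed

lemma fsubdiff_uminus_upper_envelope:
  assumes "(f has_derivative (\<lambda>p. w \<bullet> p)) (at (x, y))"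
    and "\<And>a. f (a, y) \<le> \<psi> a" and "\<psi> x = f (x, y)"
  shows "fsubdiff (\<lambda>z. - \<psi> z) x \<subseteq> {- fst w}"
proof -
  have "fsubdiff (\<lambda>z. - \<psi> z) x \<subseteq> fsubdiff (\<lambda>a. - f (a, y)) x"
    using assms(2,3) by (intro fsubdiff_mono) simp_all
  also have "\<dots> \<subseteq> {- fst w}"
    using has_derivative_minus[OF has_derivative_Pair_fst[OF assms(1)]]
    by (intro fsubdiff_subset_gradient) simp
  finally show ?thesis .
qed

lemma inner_minus_square_le:
  fixes u z :: "'a::real_inner"
  assumes "\<rho> > 0"
  shows "u \<bullet> z - \<rho> / 2 * (norm z)\<^sup>2 \<le> (norm u)\<^sup>2 / (2 * \<rho>)"
proof -
  have "0 \<le> (norm u - \<rho> * norm z)\<^sup>2" by simp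
  then have "norm u * norm z - \<rho> / 2 * (norm z)\<^sup>2 \<le> (norm u)\<^sup>2 / (2 * \<rho>)"
    using assms by (simp add: field_simps power2_eq_square)
  then show ?thesis
    using norm_cauchy_schwarz[of u z] by linarith
qed

lemma le_SUP_regularized_gap:
  fixes F :: "'a::real_inner \<Rightarrow> 'a"
  assumes "\<rho> > 0" and "b \<in> \<Omega>"
  shows "F a \<bullet> (a - b) - \<rho> / 2 * (norm (a - b))\<^sup>2
    \<le> (SUP b\<in>\<Omega>. F a \<bullet> (a - b) - \<rho> / 2 * (norm (a - b))\<^sup>2)"
  using inner_minus_square_le[OF assms(1), of "F a"]
  by (intro cSUP_upper[OF assms(2)] bdd_aboveI2) simp

lemma farkas_convex_cone_hull:
  fixes w :: "'a::euclidean_space"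
  assumes "finite S"
    and polar: "\<And>d. (\<And>a. a \<in> S \<Longrightarrow> a \<bullet> d \<le> 0) \<Longrightarrow> w \<bullet> d \<le> 0"
  shows "w \<in> convex_cone hull S"
proof (rule ccontr)
  let ?C = "convex_cone hull S"
  assume "w \<notin> ?C"
  then obtain a b where ab: "a \<bullet> w < b" "\<And>z. z \<in> ?C \<Longrightarrow> a \<bullet> z > b"
    using separating_hyperplane_closed_point[OF convex_convex_cone_hull closed_convex_cone_hull[OF \<open>finite S\<close>]]
    by blast
  have "b < 0"
    using ab(2)[OF convex_cone_hull_contains_0] by simp
  have nonneg: "a \<bullet> z \<ge> 0" if "z \<in> ?C" for z
  proof (rule ccontr)
    assume "\<not> a \<bullet> z \<ge> 0"
    then have "(b / (a \<bullet> z)) *\<^sub>R z \<in> ?C"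
      using that \<open>b < 0\<close> by (intro convex_cone_hull_mul) (auto simp: divide_nonpos_neg)
    from ab(2)[OF this] \<open>\<not> a \<bullet> z \<ge> 0\<close> show False
      by simp
  qed
  have "w \<bullet> (- a) \<le> 0"
    using nonneg by (intro polar) (simp add: hull_inc inner_commute)
  with ab(1) \<open>b < 0\<close> show False
    by (simp add: inner_commute)
qed

lemma normal_coneI:
  assumes "\<And>i. i < r \<Longrightarrow> \<mu> i \<ge> 0 \<and> \<mu> i * g i y = 0"
  shows "(\<Sum>i<r. \<mu> i *\<^sub>R grad (g i) y) + (\<Sum>j<s. \<kappa> j *\<^sub>R grad (h j) y) \<in> normal_cone r s g h y"
  using assms unfolding normal_cone_def by blast

lemma normal_coneE:
  assumes "w \<in> normal_cone r s g h y"
  obtains \<mu> \<kappa> where "w = (\<Sum>i<r. \<mu> i *\<^sub>R grad (g i) y) + (\<Sum>j<s. \<kappa> j *\<^sub>R grad (h j) y)"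
    and "\<forall>i<r. \<mu> i \<ge> 0 \<and> \<mu> i * g i y = 0"
  using assms unfolding normal_cone_def by blast

lemma convex_cone_normal_cone: "convex_cone (normal_cone r s g h y)"
  unfolding convex_cone_iff
proof (intro conjI ballI allI impI)
  show "0 \<in> normal_cone r s g h y"
    using normal_coneI[where \<mu>="\<lambda>_. 0" and \<kappa>="\<lambda>_. 0"] by simp
next
  fix p q assume "p \<in> normal_cone r s g h y" "q \<in> normal_cone r s g h y"
  obtain \<mu>1 \<kappa>1 where
    p: "p = (\<Sum>i<r. \<mu>1 i *\<^sub>R grad (g i) y) + (\<Sum>j<s. \<kappa>1 j *\<^sub>R grad (h j) y)"
      "\<forall>i<r. \<mu>1 i \<ge> 0 \<and> \<mu>1 i * g i y = 0"
    using \<open>p \<in> normal_cone r s g h y\<close> by (rule normal_coneE)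
  obtain \<mu>2 \<kappa>2 where
    q: "q = (\<Sum>i<r. \<mu>2 i *\<^sub>R grad (g i) y) + (\<Sum>j<s. \<kappa>2 j *\<^sub>R grad (h j) y)"
      "\<forall>i<r. \<mu>2 i \<ge> 0 \<and> \<mu>2 i * g i y = 0"
    using \<open>q \<in> normal_cone r s g h y\<close> by (rule normal_coneE)
  have "p + q = (\<Sum>i<r. (\<mu>1 i + \<mu>2 i) *\<^sub>R grad (g i) y) + (\<Sum>j<s. (\<kappa>1 j + \<kappa>2 j) *\<^sub>R grad (h j) y)"
    unfolding p q by (simp add: scaleR_add_left sum.distrib)
  also have "\<dots> \<in> normal_cone r s g h y"
    using p(2) q(2) by (intro normal_coneI) (auto simp: distrib_right)
  finally show "p + q \<in> normal_cone r s g h y" .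
next
  fix p and c :: real assume "p \<in> normal_cone r s g h y" "c \<ge> 0"
  obtain \<mu> \<kappa> where
    p: "p = (\<Sum>i<r. \<mu> i *\<^sub>R grad (g i) y) + (\<Sum>j<s. \<kappa> j *\<^sub>R grad (h j) y)"
      "\<forall>i<r. \<mu> i \<ge> 0 \<and> \<mu> i * g i y = 0"
    using \<open>p \<in> normal_cone r s g h y\<close> by (rule normal_coneE)
  have "c *\<^sub>R p = (\<Sum>i<r. (c * \<mu> i) *\<^sub>R grad (g i) y) + (\<Sum>j<s. (c * \<kappa> j) *\<^sub>R grad (h j) y)"
    unfolding p by (simp add: scaleR_add_right scaleR_sum_right)
  also have "\<dots> \<in> normal_cone r s g h y"
    using p(2) \<open>c \<ge> 0\<close> by (intro normal_coneI) simp
  finally show "c *\<^sub>R p \<in> normal_cone r s g h y" .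
qed

lemma sum_scaleR_delta:
  fixes a :: "nat \<Rightarrow> 'a::real_vector"
  assumes "k < n"
  shows "(\<Sum>i<n. (if i = k then c else 0) *\<^sub>R a i) = c *\<^sub>R a k"
  using assms by (simp add: if_distrib[of "\<lambda>t. t *\<^sub>R _"] cong: if_cong)

lemma constraint_grads_in_normal_cone:
  shows "\<lbrakk>i < r; g i y = 0\<rbrakk> \<Longrightarrow> grad (g i) y \<in> normal_cone r s g h y"
    and "j < s \<Longrightarrow> grad (h j) y \<in> normal_cone r s g h y"
    and "j < s \<Longrightarrow> - grad (h j) y \<in> normal_cone r s g h y"
proof -
  assume "i < r" "g i y = 0"
  then have "(\<Sum>k<r. (if k = i then 1 else 0) *\<^sub>R grad (g k) y) + (\<Sum>j<s. 0 *\<^sub>R grad (h j) y)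
      \<in> normal_cone r s g h y"
    by (intro normal_coneI) simp
  with \<open>i < r\<close> show "grad (g i) y \<in> normal_cone r s g h y"
    by (simp add: sum_scaleR_delta)
next
  assume "j < s"
  have "(\<Sum>i<r. 0 *\<^sub>R grad (g i) y) + (\<Sum>k<s. (if k = j then c else 0) *\<^sub>R grad (h k) y)
      \<in> normal_cone r s g h y" for c
    by (intro normal_coneI) simp
  from this[of 1] this[of "-1"] \<open>j < s\<close>
  show "grad (h j) y \<in> normal_cone r s g h y" "- grad (h j) y \<in> normal_cone r s g h y"
    by (simp_all add: sum_scaleR_delta)
qed

definition linearized_cone ::
    "nat \<Rightarrow> nat \<Rightarrow> (nat \<Rightarrow> 'a::real_inner \<Rightarrow> real) \<Rightarrow> (nat \<Rightarrow> 'a \<Rightarrow> real) \<Rightarrow> 'a \<Rightarrow> 'a set" where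
  "linearized_cone r s g h y =
    {d. (\<forall>i<r. g i y = 0 \<longrightarrow> grad (g i) y \<bullet> d \<le> 0) \<and> (\<forall>j<s. grad (h j) y \<bullet> d = 0)}"

lemma polar_linearized_cone_subset_normal_cone:
  fixes y :: "'a::euclidean_space"
  shows "{w. \<forall>d \<in> linearized_cone r s g h y. w \<bullet> d \<le> 0} \<subseteq> normal_cone r s g h y"
proof
  fix w assume w: "w \<in> {w. \<forall>d \<in> linearized_cone r s g h y. w \<bullet> d \<le> 0}"
  define S where "S = (\<lambda>i. grad (g i) y) ` {i. i < r \<and> g i y = 0}
    \<union> (\<lambda>j. grad (h j) y) ` {..<s} \<union> (\<lambda>j. - grad (h j) y) ` {..<s}"
  have "w \<in> convex_cone hull S"
  proof (rule farkas_convex_cone_hull)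
    show "finite S"
      by (simp add: S_def)
  next
    fix d assume polar: "\<And>a. a \<in> S \<Longrightarrow> a \<bullet> d \<le> 0"
    have "grad (g i) y \<bullet> d \<le> 0" if "i < r" "g i y = 0" for i
      using that by (intro polar) (simp add: S_def)
    moreover have "grad (h j) y \<bullet> d \<le> 0" "- grad (h j) y \<bullet> d \<le> 0" if "j < s" for j
      using that by (intro polar; simp add: S_def)+
    ultimately have "d \<in> linearized_cone r s g h y"
      unfolding linearized_cone_def by (simp add: order.antisym)
    with w show "w \<bullet> d \<le> 0"
      by blast
  qed
  also have "convex_cone hull S \<subseteq> normal_cone r s g h y"
    using constraint_grads_in_normal_cone convex_cone_normal_cone
    unfolding S_def by (intro hull_minimal) auto
  finally show "w \<in> normal_cone r s g h y" .
qed

lemma linearly_independent_family: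
  fixes a :: "nat \<Rightarrow> 'a::real_vector"
  assumes ind: "\<forall>c. (\<Sum>j<s. c j *\<^sub>R a j) = 0 \<longrightarrow> (\<forall>j<s. c j = 0)"
  shows linearly_independent_family_inj: "inj_on a {..<s}"
    and linearly_independent_family_independent: "independent (a ` {..<s})"
proof -
  show inj: "inj_on a {..<s}"
  proof (rule inj_onI, rule ccontr)
    fix j k assume jk: "j \<in> {..<s}" "k \<in> {..<s}" "a j = a k" "j \<noteq> k"
    define c where "c i = (if i = j then 1 else if i = k then -1 else (0::real))" for i
    have "\<And>i. c i *\<^sub>R a i = (if i = j then a j else 0) - (if i = k then a k else 0)"
      using jk by (auto simp: c_def)
    then have "(\<Sum>i<s. c i *\<^sub>R a i) = (\<Sum>i<s. (if i = j then a j else 0)) - (\<Sum>i<s. (if i = k then a k else 0))"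
      by (simp add: sum_subtractf)
    also have "\<dots> = 0" using jk by simp
    finally have "\<forall>i<s. c i = 0" using ind[rule_format, of c] by blast
    then show False using jk by (auto simp: c_def)
  qed
  show "independent (a ` {..<s})"
  proof
    assume "dependent (a ` {..<s})"
    then obtain u where u: "\<exists>v\<in>a ` {..<s}. u v \<noteq> 0" "(\<Sum>v\<in>a ` {..<s}. u v *\<^sub>R v) = 0"
      using real_vector.dependent_finite[of "a ` {..<s}"] by auto
    have "(\<Sum>j<s. u (a j) *\<^sub>R a j) = 0"
      using u(2) by (simp add: sum.reindex[OF inj])
    then have "\<forall>j<s. u (a j) = 0" using ind[rule_format, of "\<lambda>j. u (a j)"] by blast
    then show False using u(1) by auto
  qed
qed

lemma biorthogonal_family_exists:
  fixes a :: "nat \<Rightarrow> 'a::euclidean_space"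
  assumes ind: "\<forall>c. (\<Sum>j<s. c j *\<^sub>R a j) = 0 \<longrightarrow> (\<forall>j<s. c j = 0)"
  obtains b where "\<And>j k. j < s \<Longrightarrow> k < s \<Longrightarrow> a k \<bullet> b j = (if k = j then 1 else 0)"
proof -
  note inj = linearly_independent_family_inj[OF ind]
  note indep = linearly_independent_family_independent[OF ind]
  have "\<forall>j\<in>{..<s}. \<exists>b. \<forall>k<s. a k \<bullet> b = (if k = j then 1 else 0)"
  proof
    fix j assume "j \<in> {..<s}"
    obtain l :: "'a \<Rightarrow> real" where l: "linear l" "\<forall>x\<in>a ` {..<s}. l x = (if x = a j then 1 else 0)"
      using real_vector.linear_independent_extend[OF indep, of "\<lambda>x. if x = a j then 1 else 0"] by blast
    have "a k \<bullet> adjoint l 1 = (if k = j then 1 else 0)" if "k < s" for k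
    proof -
      have "a k \<bullet> adjoint l 1 = l (a k)"
        using adjoint_works[OF l(1), of "a k" 1] by simp
      also have "\<dots> = (if k = j then 1 else 0)"
        using l(2) inj_onD[OF inj, of k j] that \<open>j \<in> {..<s}\<close> by auto
      finally show ?thesis .
    qed
    then show "\<exists>b. \<forall>k<s. a k \<bullet> b = (if k = j then 1 else 0)"
      by blast
  qed
  from bchoice[OF this] obtain b
    where b: "\<forall>j\<in>{..<s}. \<forall>k<s. a k \<bullet> b j = (if k = j then 1 else 0)"
    by blast
  show ?thesis
    by (rule that[of b]) (simp add: b)
qed

lemma has_real_derivative_along_curve:
  assumes "(z has_derivative (\<lambda>t. t *\<^sub>R d)) (at 0)"
    and "(f has_derivative (\<lambda>k. G \<bullet> k)) (at (z 0))"
  shows "((\<lambda>t. f (z t)) has_real_derivative (G \<bullet> d)) (at 0)"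
proof -
  have "((f \<circ> z) has_derivative ((\<lambda>k. G \<bullet> k) \<circ> (\<lambda>t. t *\<^sub>R d))) (at 0)"
    using assms by (rule diff_chain_at)
  moreover have "(\<lambda>k. G \<bullet> k) \<circ> (\<lambda>t. t *\<^sub>R d) = (*) (G \<bullet> d)"
    by (auto simp: fun_eq_iff mult.commute)
  ultimately show ?thesis
    by (simp add: has_field_derivative_def o_def)
qed

lemma inner_sum_biorthogonal:
  fixes a b :: "nat \<Rightarrow> 'a::real_inner"
  assumes "\<And>j k. j < s \<Longrightarrow> k < s \<Longrightarrow> a k \<bullet> b j = (if k = j then 1 else 0)" and "k < s"
  shows "a k \<bullet> (\<Sum>j<s. X j *\<^sub>R b j) = X k"
proof -
  have "a k \<bullet> (\<Sum>j<s. X j *\<^sub>R b j) = (\<Sum>j<s. if j = k then X j else 0)"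
    unfolding inner_sum_right by (rule sum.cong) (auto simp: assms)
  also have "\<dots> = X k"
    using \<open>k < s\<close> by simp
  finally show ?thesis .
qed

lemma local_inverse_of_identity_derivative:
  fixes \<Phi> :: "'a::euclidean_space \<Rightarrow> 'a" and \<Phi>' :: "'a \<Rightarrow> 'a \<Rightarrow>\<^sub>L 'a"
  assumes d\<Phi>: "\<And>z. (\<Phi> has_derivative blinfun_apply (\<Phi>' z)) (at z)"
    and "continuous_on UNIV \<Phi>'" and "\<Phi>' y = id_blinfun"
  obtains \<Psi> where "\<Psi> (\<Phi> y) = y" "(\<Psi> has_derivative id) (at (\<Phi> y))"
    "eventually (\<lambda>w. \<Phi> (\<Psi> w) = w) (nhds (\<Phi> y))"
proof -
  have "id_blinfun o\<^sub>L \<Phi>' y = id_blinfun"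
    by (rule blinfun_eqI) (simp add: assms(3))
  then obtain U V \<Psi> \<Psi>' where "open V" "\<Phi> y \<in> V" "y \<in> U"
    and hom: "homeomorphism U V \<Phi> \<Psi>"
    and d\<Psi>: "\<And>w. w \<in> V \<Longrightarrow> (\<Psi> has_derivative \<Psi>' w) (at w)"
    and \<Psi>': "\<And>w. w \<in> V \<Longrightarrow> \<Psi>' w = inv (blinfun_apply (\<Phi>' (\<Psi> w)))"
    using inverse_function_theorem[OF open_UNIV d\<Phi> assms(2)] by (metis UNIV_I)
  have "\<Psi> (\<Phi> y) = y"
    using homeomorphism_apply1[OF hom \<open>y \<in> U\<close>] .
  moreover have "(\<Psi> has_derivative id) (at (\<Phi> y))"
    using d\<Psi>[OF \<open>\<Phi> y \<in> V\<close>] \<Psi>'[OF \<open>\<Phi> y \<in> V\<close>] \<open>\<Psi> (\<Phi> y) = y\<close> assms(3)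
    by (simp add: inv_id id_def[symmetric])
  moreover have "eventually (\<lambda>w. \<Phi> (\<Psi> w) = w) (nhds (\<Phi> y))"
    using homeomorphism_apply2[OF hom] \<open>open V\<close> \<open>\<Phi> y \<in> V\<close> eventually_nhds by blast
  ultimately show ?thesis
    using that by blast
qed

lemma exists_zero_set_chart:
  fixes h :: "nat \<Rightarrow> 'a::euclidean_space \<Rightarrow> real"
  assumes dh: "\<And>j z. j < s \<Longrightarrow> h j differentiable at z"
    and ch: "\<And>j. j < s \<Longrightarrow> continuous_on UNIV (grad (h j))"
    and hy: "\<And>j. j < s \<Longrightarrow> h j y = 0"
    and ind: "\<forall>c. (\<Sum>j<s. c j *\<^sub>R grad (h j) y) = 0 \<longrightarrow> (\<forall>j<s. c j = 0)"
  obtains \<Phi> :: "'a \<Rightarrow> 'a" and \<Phi>' where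
    "\<And>z. (\<Phi> has_derivative blinfun_apply (\<Phi>' z)) (at z)" "continuous_on UNIV \<Phi>'"
    "\<Phi>' y = id_blinfun" "\<Phi> y = 0" "\<And>k z. k < s \<Longrightarrow> grad (h k) y \<bullet> \<Phi> z = h k z"
proof -
  obtain c where c: "\<And>j k. j < s \<Longrightarrow> k < s \<Longrightarrow> grad (h k) y \<bullet> c j = (if k = j then 1 else 0)"
    using biorthogonal_family_exists[OF ind] by blast
  \<comment> \<open>The coordinates of z - y along the dual family c are replaced by the values h j z.\<close>
  define \<Phi> where
    "\<Phi> z = (z - y) - (\<Sum>j<s. (grad (h j) y \<bullet> (z - y)) *\<^sub>R c j) + (\<Sum>j<s. h j z *\<^sub>R c j)" for z
  define L where
    "L z w = w - (\<Sum>j<s. (grad (h j) y \<bullet> w) *\<^sub>R c j) + (\<Sum>j<s. (grad (h j) z \<bullet> w) *\<^sub>R c j)" for z w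
  have "bounded_linear (L z)" for z
    unfolding L_def by (auto intro!: bounded_linear_intros)
  then have L_apply: "blinfun_apply (Blinfun (L z)) = L z" for z
    by (simp add: bounded_linear_Blinfun_apply)
  show ?thesis
  proof (rule that)
    show "(\<Phi> has_derivative blinfun_apply (Blinfun (L z))) (at z)" for z
      unfolding L_apply L_def \<Phi>_def [abs_def]
      by (auto intro!: derivative_eq_intros has_derivative_grad dh)
    show "continuous_on UNIV (\<lambda>z. Blinfun (L z))"
      by (rule continuous_on_blinfun_componentwise)
         (auto simp: L_apply L_def intro!: continuous_intros ch)
    show "Blinfun (L y) = id_blinfun"
      by (rule blinfun_eqI) (simp add: L_apply L_def)
    show "\<Phi> y = 0"
      using hy by (simp add: \<Phi>_def)
    show "grad (h k) y \<bullet> \<Phi> z = h k z" if "k < s" for k z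
      using inner_sum_biorthogonal[OF c that]
      by (simp add: \<Phi>_def inner_diff_right inner_add_right)
  qed
qed

lemma exists_arc_in_zero_set:
  fixes h :: "nat \<Rightarrow> 'a::euclidean_space \<Rightarrow> real"
  assumes dh: "\<And>j z. j < s \<Longrightarrow> h j differentiable at z"
    and ch: "\<And>j. j < s \<Longrightarrow> continuous_on UNIV (grad (h j))"
    and hy: "\<And>j. j < s \<Longrightarrow> h j y = 0"
    and ind: "\<forall>c. (\<Sum>j<s. c j *\<^sub>R grad (h j) y) = 0 \<longrightarrow> (\<forall>j<s. c j = 0)"
    and tangent: "\<And>j. j < s \<Longrightarrow> grad (h j) y \<bullet> d = 0"
  obtains z where "z 0 = y" "(z has_derivative (\<lambda>t. t *\<^sub>R d)) (at 0)"
    "eventually (\<lambda>t. \<forall>j<s. h j (z t) = 0) (at 0)"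
proof -
  obtain \<Phi> :: "'a \<Rightarrow> 'a" and \<Phi>' where d\<Phi>: "\<And>z. (\<Phi> has_derivative blinfun_apply (\<Phi>' z)) (at z)"
    and "continuous_on UNIV \<Phi>'" "\<Phi>' y = id_blinfun" "\<Phi> y = 0"
    and h\<Phi>: "\<And>k z. k < s \<Longrightarrow> grad (h k) y \<bullet> \<Phi> z = h k z"
    using exists_zero_set_chart[OF dh ch hy ind] by blast
  then obtain \<Psi> where "\<Psi> 0 = y" and d\<Psi>: "(\<Psi> has_derivative id) (at 0)"
    and \<Phi>\<Psi>: "eventually (\<lambda>w. \<Phi> (\<Psi> w) = w) (nhds 0)"
    using local_inverse_of_identity_derivative[OF d\<Phi>] by metis
  define z where "z t = \<Psi> (t *\<^sub>R d)" for t :: real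
  have "((\<Psi> \<circ> (\<lambda>t. t *\<^sub>R d)) has_derivative (id \<circ> (\<lambda>t. t *\<^sub>R d))) (at 0)"
    by (rule diff_chain_at) (auto intro!: derivative_eq_intros simp: d\<Psi>)
  then have "(z has_derivative (\<lambda>t. t *\<^sub>R d)) (at 0)"
    unfolding z_def[abs_def] by (simp add: o_def)
  moreover have "eventually (\<lambda>t. \<forall>j<s. h j (z t) = 0) (at 0)"
  proof -
    have "filterlim (\<lambda>t::real. t *\<^sub>R d) (nhds 0) (at 0)"
      by (auto intro!: tendsto_eq_intros)
    with \<Phi>\<Psi> have "eventually (\<lambda>t. \<Phi> (z t) = t *\<^sub>R d) (at 0)"
      unfolding z_def filterlim_iff by blast
    then show ?thesis
      by (auto elim!: eventually_mono simp: h\<Phi>[symmetric] tangent)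
  qed
  moreover have "z 0 = y"
    by (simp add: z_def \<open>\<Psi> 0 = y\<close>)
  ultimately show ?thesis
    using that by blast
qed

lemma exists_feasible_arc:
  fixes g h :: "nat \<Rightarrow> 'a::euclidean_space \<Rightarrow> real"
  assumes dg: "\<And>i. i < r \<Longrightarrow> g i differentiable at y"
    and dh: "\<And>j z. j < s \<Longrightarrow> h j differentiable at z"
    and ch: "\<And>j. j < s \<Longrightarrow> continuous_on UNIV (grad (h j))"
    and y: "y \<in> feas_set r s g h"
    and ind: "\<forall>c. (\<Sum>j<s. c j *\<^sub>R grad (h j) y) = 0 \<longrightarrow> (\<forall>j<s. c j = 0)"
    and active: "\<And>i. i < r \<Longrightarrow> g i y = 0 \<Longrightarrow> grad (g i) y \<bullet> d < 0"
    and tangent: "\<And>j. j < s \<Longrightarrow> grad (h j) y \<bullet> d = 0"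
  obtains z where "z 0 = y" "(z has_derivative (\<lambda>t. t *\<^sub>R d)) (at 0)"
    "eventually (\<lambda>t. z t \<in> feas_set r s g h) (at_right 0)"
proof -
  have hy: "h j y = 0" if "j < s" for j
    using y that by (simp add: feas_set_def)
  obtain z where z0: "z 0 = y" and dz: "(z has_derivative (\<lambda>t. t *\<^sub>R d)) (at 0)"
    and hz: "eventually (\<lambda>t. \<forall>j<s. h j (z t) = 0) (at 0)"
    using exists_arc_in_zero_set[OF dh ch hy ind tangent] by blast
  have "eventually (\<lambda>t. g i (z t) \<le> 0) (at_right 0)" if "i < r" for i
  proof -
    have dgz: "((\<lambda>t. g i (z t)) has_real_derivative (grad (g i) y \<bullet> d)) (at 0)"
      using dz has_derivative_grad[OF dg[OF that]] z0 by (intro has_real_derivative_along_curve) simp_all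
    show ?thesis
    proof (cases "g i y = 0")
      case True
      from DERIV_neg_dec_right[OF dgz active[OF that True]]
      show ?thesis
        using True z0 by (auto simp: eventually_at_right_field intro: less_imp_le)
    next
      case False
      then have "g i y < 0"
        using y that by (auto simp: feas_set_def order.order_iff_strict)
      have "((\<lambda>t. g i (z t)) \<longlongrightarrow> g i y) (at 0)"
        using DERIV_isCont[OF dgz] z0 by (simp add: isCont_def)
      then have "eventually (\<lambda>t. g i (z t) < 0) (at 0)"
        using \<open>g i y < 0\<close> by (rule order_tendstoD)
      then show ?thesis
        by (auto simp: eventually_at_split elim: eventually_mono)
    qed
  qed
  then have "eventually (\<lambda>t. \<forall>i\<in>{..<r}. g i (z t) \<le> 0) (at_right 0)"
    by (intro eventually_ball_finite) auto
  moreover have "eventually (\<lambda>t. \<forall>j<s. h j (z t) = 0) (at_right 0)"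
    using hz by (simp add: eventually_at_split)
  ultimately have "eventually (\<lambda>t. z t \<in> feas_set r s g h) (at_right 0)"
    by eventually_elim (simp add: feas_set_def)
  with z0 dz that show ?thesis
    by blast
qed

lemma maximizer_grad_in_normal_cone:
  fixes f :: "'a::euclidean_space \<Rightarrow> real"
  assumes dg: "\<And>i. i < r \<Longrightarrow> g i differentiable at y"
    and dh: "\<And>j z. j < s \<Longrightarrow> h j differentiable at z"
    and ch: "\<And>j. j < s \<Longrightarrow> continuous_on UNIV (grad (h j))"
    and mfcq: "MFCQ r s g h"
    and y: "y \<in> feas_set r s g h"
    and df: "f differentiable at y"
    and max: "\<And>z. z \<in> feas_set r s g h \<Longrightarrow> f z \<le> f y"
  shows "grad f y \<in> normal_cone r s g h y"
proof -
  obtain v where ind: "\<forall>c. (\<Sum>j<s. c j *\<^sub>R grad (h j) y) = 0 \<longrightarrow> (\<forall>j<s. c j = 0)"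
    and v_active: "\<And>i. i < r \<Longrightarrow> g i y = 0 \<Longrightarrow> grad (g i) y \<bullet> v < 0"
    and v_tangent: "\<And>j. j < s \<Longrightarrow> grad (h j) y \<bullet> v = 0"
    using mfcq y unfolding MFCQ_def by blast
  have strict: "grad f y \<bullet> d \<le> 0"
    if active: "\<And>i. i < r \<Longrightarrow> g i y = 0 \<Longrightarrow> grad (g i) y \<bullet> d < 0"
      and tangent: "\<And>j. j < s \<Longrightarrow> grad (h j) y \<bullet> d = 0" for d
  proof (rule ccontr)
    assume "\<not> grad f y \<bullet> d \<le> 0"
    obtain z where z0: "z 0 = y" and dz: "(z has_derivative (\<lambda>t. t *\<^sub>R d)) (at 0)"
      and feas: "eventually (\<lambda>t. z t \<in> feas_set r s g h) (at_right 0)"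
      using exists_feasible_arc[OF dg dh ch y ind active tangent] by blast
    have "((\<lambda>t. f (z t)) has_real_derivative (grad f y \<bullet> d)) (at 0)"
      using dz has_derivative_grad[OF df] z0 by (intro has_real_derivative_along_curve) simp_all
    from DERIV_pos_inc_right[OF this] \<open>\<not> grad f y \<bullet> d \<le> 0\<close>
    have "eventually (\<lambda>t. f y < f (z t)) (at_right 0)"
      using z0 by (auto simp: eventually_at_right_field)
    with feas have "eventually (\<lambda>t. False) (at_right (0::real))"
      by eventually_elim (use max in force)
    then show False
      by simp
  qed
  have "grad f y \<bullet> d \<le> 0" if d: "d \<in> linearized_cone r s g h y" for d
  proof (rule tendsto_upperbound)
    show "((\<lambda>e. grad f y \<bullet> (d + e *\<^sub>R v)) \<longlongrightarrow> grad f y \<bullet> d) (at_right 0)"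
      by (auto intro!: tendsto_eq_intros)
    show "eventually (\<lambda>e. grad f y \<bullet> (d + e *\<^sub>R v) \<le> 0) (at_right 0)"
    proof (rule eventually_at_rightI[of 0 1])
      fix e :: real assume "e \<in> {0<..<1}"
      show "grad f y \<bullet> (d + e *\<^sub>R v) \<le> 0"
      proof (rule strict)
        fix i assume "i < r" "g i y = 0"
        then show "grad (g i) y \<bullet> (d + e *\<^sub>R v) < 0"
          using d v_active[of i] \<open>e \<in> {0<..<1}\<close> unfolding linearized_cone_def
          by (auto simp: inner_add_right intro: add_nonpos_neg mult_pos_neg)
      next
        fix j assume "j < s"
        then show "grad (h j) y \<bullet> (d + e *\<^sub>R v) = 0"
          using d v_tangent[of j] by (simp add: linearized_cone_def inner_add_right)
      qed
    qed simp
  qed simp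
  then show ?thesis
    using polar_linearized_cone_subset_normal_cone by blast
qed

lemma real_poly_map_differentiable:
  fixes F :: "real ^ 'n \<Rightarrow> real ^ 'n"
  assumes "\<forall>k. real_poly_fun (\<lambda>z. F z $ k)"
  shows "F differentiable at x"
  unfolding differentiable_componentwise_within[of F]
proof
  fix b :: "real ^ 'n" assume "b \<in> Basis"
  then obtain k where "b = axis k 1"
    by (auto simp: Basis_vec_def)
  then show "(\<lambda>z. F z \<bullet> b) differentiable at x"
    using assms by (auto simp: inner_axis intro!: real_poly_fun_differentiable)
qed

lemma differentiable_regularized_gap:
  fixes F :: "'a::euclidean_space \<Rightarrow> 'a"
  assumes "F differentiable at x"
  shows "(\<lambda>p. F (fst p) \<bullet> (fst p - snd p) - \<rho> / 2 * (norm (fst p - snd p))\<^sup>2) differentiable at (x, y)"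
proof -
  obtain F' where "(F has_derivative F') (at x)"
    using assms differentiable_def by blast
  then have dF: "((\<lambda>p. F (fst p)) has_derivative (\<lambda>p. F' (fst p))) (at (x, y))"
    using has_derivative_compose[OF has_derivative_fst[OF has_derivative_ident[of "at (x, y)"]], of F]
    by simp
  show ?thesis
    unfolding power2_norm_eq_inner differentiable_def
    by (rule exI) (rule derivative_intros dF)+
qed

theorem lemma3p4:
  fixes F :: "real ^ 'n \<Rightarrow> real ^ 'n"
    and g h :: "nat \<Rightarrow> real ^ 'n \<Rightarrow> real"
    and r s :: nat and \<rho> :: real
    and \<phi> :: "real ^ 'n \<Rightarrow> real ^ 'n \<Rightarrow> real"
    and \<psi> :: "real ^ 'n \<Rightarrow> real"
    and \<Omega> :: "(real ^ 'n) set"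
    and x y :: "real ^ 'n"
  assumes F_poly: "\<forall>k. real_poly_fun (\<lambda>z. F z $ k)"
    and g_poly: "\<forall>i<r. real_poly_fun (g i)"
    and h_poly: "\<forall>j<s. real_poly_fun (h j)"
    and Omega_def: "\<Omega> = feas_set r s g h"
    and Omega_ne: "\<Omega> \<noteq> {}"
    and rho_pos: "\<rho> > 0"
    and phi_def: "\<forall>a b. \<phi> a b = inner (F a) (a - b) - \<rho> / 2 * (norm (a - b))\<^sup>2"
    and psi_def: "\<forall>a. \<psi> a = (SUP b\<in>\<Omega>. \<phi> a b)"
    and mfcq: "MFCQ r s g h"
    and y_in: "y \<in> {b \<in> \<Omega>. \<psi> x = \<phi> x b}"
  shows "fsubdiff (\<lambda>z. - \<psi> z) x \<subseteq>
     {v. (v, 0) \<in> {- grad (\<lambda>p. \<phi> (fst p) (snd p)) (x, y) + (0, w) | w. w \<in> normal_cone r s g h y}}"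
proof
  fix v assume v: "v \<in> fsubdiff (\<lambda>z. - \<psi> z) x"
  have y: "y \<in> feas_set r s g h" and \<psi>x: "\<psi> x = \<phi> x y"
    using y_in Omega_def by auto
  have \<phi>_le_\<psi>: "\<phi> a b \<le> \<psi> a" if "b \<in> feas_set r s g h" for a b
    using le_SUP_regularized_gap[OF rho_pos that] phi_def psi_def Omega_def by simp
  have "(\<lambda>p. \<phi> (fst p) (snd p)) differentiable at (x, y)"
    using differentiable_regularized_gap[OF real_poly_map_differentiable[OF F_poly]] phi_def
    by simp
  then have d\<phi>: "((\<lambda>p. \<phi> (fst p) (snd p)) has_derivative
      (\<lambda>p. grad (\<lambda>p. \<phi> (fst p) (snd p)) (x, y) \<bullet> p)) (at (x, y))"
    by (rule has_derivative_grad)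
  obtain wx wy where grad_xy: "grad (\<lambda>p. \<phi> (fst p) (snd p)) (x, y) = (wx, wy)"
    by (cases "grad (\<lambda>p. \<phi> (fst p) (snd p)) (x, y)")
  have "v = - wx"
    using fsubdiff_uminus_upper_envelope[OF d\<phi>, of \<psi>] v \<phi>_le_\<psi> y \<psi>x
    by (auto simp: grad_xy)
  moreover have "wy \<in> normal_cone r s g h y"
  proof -
    have d\<phi>y: "(\<phi> x has_derivative (\<lambda>k. wy \<bullet> k)) (at y)"
      using has_derivative_Pair_snd[OF d\<phi>] by (simp add: grad_xy)
    have "\<phi> x z \<le> \<phi> x y" if "z \<in> feas_set r s g h" for z
      using \<phi>_le_\<psi>[OF that, of x] \<psi>x by simp
    then have "grad (\<phi> x) y \<in> normal_cone r s g h y"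
      using g_poly h_poly mfcq y differentiableI[OF d\<phi>y]
      by (intro maximizer_grad_in_normal_cone)
         (auto intro: real_poly_fun_differentiable continuous_on_grad_real_poly_fun)
    then show ?thesis
      using grad_eqI[OF d\<phi>y] by simp
  qed
  moreover have "(- wx, 0) = - (wx, wy) + (0, wy)"
    by simp
  ultimately show "v \<in> {v. (v, 0) \<in> {- grad (\<lambda>p. \<phi> (fst p) (snd p)) (x, y) + (0, w) | w. w \<in> normal_cone r s g h y}}"
    unfolding grad_xy by blast
qed

end
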